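(* Let $\xi\in\mathcal N_{\rm pol}$ with $0\in\xi$, and let $\ell>0$. Suppose $\xi\cap K_\ell(z)\ne\emptyset$ for every $z\in I$. Then $D(0|\xi)\subset B_{6\ell d^2}(0)$.
   Context: $\mathcal N$ is the set of locally finite subsets of $\mathbb R^d$; for $x\in\xi$, $\mathrm{Vor}(x|\xi)=\{y:|y-x|\le|y-z|\ \forall z\in\xi\}$; $\mathcal N_{\rm pol}$ is the set of $\xi\in\mathcal N$ all of whose Voronoi cells are convex polytopes. For $\xi\in\mathcal N_{\rm pol}$ and $x\in\xi$, the fundamental region $D(x|\xi)$ is the union of the closed balls centered at $v$ with radius $|v-x|$, as $v$ ranges over the vertices of $\mathrm{Vor}(x|\xi)$. $B_r(0)$ is the closed Euclidean ball of radius $r$ centered at $0$. $I:=\{z\in\mathbb Z^d:|z|_\infty=d\}$ and $K_\ell(z):=z\ell+[-\ell/2,\ell/2]^d$. *)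

theory Defs
  imports "HOL-Analysis.Analysis"
begin

(* Points of R^d are modelled as real^'n, d = CARD('n); norm is Euclidean. *)

definition locally_finite :: "(real^'n) set \<Rightarrow> bool" where
  "locally_finite \<xi> \<longleftrightarrow> (\<forall>r::real. finite (\<xi> \<inter> cball 0 r))"

definition Vor :: "real^'n \<Rightarrow> (real^'n) set \<Rightarrow> (real^'n) set" where
  "Vor x \<xi> = {y. \<forall>z\<in>\<xi>. dist y x \<le> dist y z}"

definition N_pol :: "(real^'n) set set" where
  "N_pol = {\<xi>. locally_finite \<xi> \<and> (\<forall>x\<in>\<xi>. polytope (Vor x \<xi>))}"

definition vertices :: "(real^'n) set \<Rightarrow> (real^'n) set" where
  "vertices P = {v. v extreme_point_of P}"

definition fund_region :: "real^'n \<Rightarrow> (real^'n) set \<Rightarrow> (real^'n) set" where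
  "fund_region x \<xi> = (\<Union>v\<in>vertices (Vor x \<xi>). cball v (dist v x))"

definition I_set :: "(int^'n) set" where
  "I_set = {z. (\<forall>i. \<bar>z$i\<bar> \<le> int CARD('n)) \<and> (\<exists>i. \<bar>z$i\<bar> = int CARD('n))}"

definition cube_K :: "real \<Rightarrow> int^'n \<Rightarrow> (real^'n) set" where
  "cube_K l z = {x. \<forall>i. \<bar>x$i - l * real_of_int (z$i)\<bar> \<le> l / 2}"

end

theory Submission
  imports Defs
begin

text \<open>
  Choose the cube \<open>K\<^sub>\<ell>(z)\<close> whose centre has coordinates \<open>\<plusminus>\<ell>d\<close> with the signs of \<open>y\<close>.
  A point \<open>x \<in> \<xi>\<close> in that cube satisfies \<open>\<langle>y, x\<rangle> \<ge> \<ell>(d - 1/2)|y|\<close> and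
  \<open>|x|\<^sup>2 \<le> d \<ell>\<^sup>2 (d + 1/2)\<^sup>2\<close>, while \<open>y \<in> Vor(0|\<xi>)\<close> forces \<open>2\<langle>y, x\<rangle> \<le> |x|\<^sup>2\<close>.
  Hence \<open>|y| \<le> 3\<ell>d\<^sup>2\<close> on the whole Voronoi cell, in particular at its vertices, so
  every ball defining \<open>D(0|\<xi>)\<close> lies in the ball of radius \<open>6\<ell>d\<^sup>2\<close> about \<open>0\<close>.
\<close>

lemma Vor_0_inner_le:
  assumes "y \<in> Vor 0 \<xi>" and "x \<in> \<xi>"
  shows "2 * inner y x \<le> (norm x)\<^sup>2"
proof -
  have "(norm y)\<^sup>2 \<le> (norm (y - x))\<^sup>2"
    using assms unfolding Vor_def by (simp add: dist_norm)
  also have "\<dots> = (norm y)\<^sup>2 - 2 * inner y x + (norm x)\<^sup>2"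
    by (simp add: power2_norm_eq_inner inner_diff_left inner_diff_right inner_commute)
  finally show ?thesis by simp
qed

lemma fund_region_subset_cball:
  assumes "Vor x \<xi> \<subseteq> cball x r"
  shows "fund_region x \<xi> \<subseteq> cball x (2 * r)"
proof
  fix w assume "w \<in> fund_region x \<xi>"
  then obtain v where v: "v \<in> vertices (Vor x \<xi>)" and w: "dist v w \<le> dist v x"
    unfolding fund_region_def by auto
  have "dist x v \<le> r"
    using v assms unfolding vertices_def extreme_point_of_def by auto
  then show "w \<in> cball x (2 * r)"
    using w dist_triangle[of x w v] by (simp add: dist_commute)
qed

lemma cube_K_norm_le:
  fixes x :: "real^'n"
  assumes "x \<in> cube_K l z" and "l \<ge> 0" and "\<And>i. \<bar>z$i\<bar> \<le> m"
  shows "(norm x)\<^sup>2 \<le> CARD('n) * (l * real_of_int m + l / 2)\<^sup>2"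
proof -
  have "\<bar>x$i\<bar> \<le> l * m + l / 2" for i
  proof -
    have "\<bar>real_of_int (z$i)\<bar> \<le> m"
      using assms(3) by (metis of_int_abs of_int_le_iff)
    then have "\<bar>l * real_of_int (z$i)\<bar> \<le> l * m"
      using assms(2) by (simp add: abs_mult mult_left_mono)
    moreover have "\<bar>x$i - l * real_of_int (z$i)\<bar> \<le> l / 2"
      using assms(1) unfolding cube_K_def by auto
    moreover have "\<bar>x$i\<bar> \<le> \<bar>x$i - l * real_of_int (z$i)\<bar> + \<bar>l * real_of_int (z$i)\<bar>"
      using abs_triangle_ineq[of "x$i - l * real_of_int (z$i)"] by simp
    ultimately show ?thesis by linarith
  qed
  then have "(x$i)\<^sup>2 \<le> (l * m + l / 2)\<^sup>2" for i
    by (metis abs_ge_zero power2_abs power_mono)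
  then have "(\<Sum>i\<in>UNIV. (x$i)\<^sup>2) \<le> (\<Sum>i\<in>(UNIV::'n set). (l * m + l / 2)\<^sup>2)"
    by (intro sum_mono)
  moreover have "(norm x)\<^sup>2 = (\<Sum>i\<in>UNIV. (x$i)\<^sup>2)"
    unfolding power2_norm_eq_inner inner_vec_def by (simp add: power2_eq_square)
  ultimately show ?thesis by simp
qed

definition sign_corner :: "real^'n \<Rightarrow> int^'n" where
  "sign_corner y = (\<chi> j. if y$j \<ge> 0 then int CARD('n) else - int CARD('n))"

lemma sign_corner_in_I_set: "sign_corner y \<in> I_set"
  unfolding I_set_def sign_corner_def by auto

lemma abs_sign_corner: "\<bar>sign_corner (y::real^'n) $ i\<bar> = int CARD('n)"
  unfolding sign_corner_def by auto

lemma inner_ge_on_cube_K_sign_corner: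
  fixes y x :: "real^'n"
  assumes "x \<in> cube_K l (sign_corner y)" and "l \<ge> 0"
  shows "l * (CARD('n) - 1/2) * norm y \<le> inner y x"
proof -
  let ?c = "l * (CARD('n) - 1/2)"
  have comp: "?c * \<bar>y$j\<bar> \<le> y$j * x$j" for j
  proof -
    have "\<bar>x$j - l * real_of_int (sign_corner y $ j)\<bar> \<le> l / 2"
      using assms(1) unfolding cube_K_def by auto
    note near = abs_le_D1[OF this] abs_le_D2[OF this]
    have c: "?c = l * CARD('n) - l / 2" by (simp add: algebra_simps)
    show ?thesis
    proof (cases "y$j \<ge> 0")
      case True
      then have "?c \<le> x$j"
        using near unfolding c by (simp add: sign_corner_def)
      then have "?c * y$j \<le> x$j * y$j"
        using True by (rule mult_right_mono)
      with True show ?thesis by (simp add: mult.commute)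
    next
      case False
      then have "x$j \<le> - ?c"
        using near unfolding c by (simp add: sign_corner_def)
      then have "?c * (- y$j) \<le> (- x$j) * (- y$j)"
        using False by (intro mult_right_mono) auto
      with False show ?thesis by (simp add: mult.commute)
    qed
  qed
  have "real CARD('n) \<ge> 1" by simp
  then have "?c \<ge> 0" using assms(2) by (intro mult_nonneg_nonneg) linarith+
  then have "?c * norm y \<le> ?c * (\<Sum>j\<in>UNIV. \<bar>y$j\<bar>)"
    by (intro mult_left_mono norm_le_l1_cart)
  also have "\<dots> \<le> (\<Sum>j\<in>UNIV. y$j * x$j)"
    by (simp add: sum_distrib_left sum_mono comp)
  finally show ?thesis by (simp add: inner_vec_def)
qed

lemma cubic_estimate:
  fixes d :: real
  assumes "d \<ge> 1"
  shows "d * (d + 1/2)\<^sup>2 \<le> 2 * (d - 1/2) * (3 * d\<^sup>2)"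
proof -
  have "d \<le> d * d"
    using mult_right_mono[OF assms, of d] assms by simp
  moreover have "(d + 1/2)\<^sup>2 = d * d + d + 1/4" "3 * d * (2 * d - 1) = 6 * (d * d) - 3 * d"
    by (simp_all add: power2_eq_square algebra_simps)
  ultimately have "(d + 1/2)\<^sup>2 \<le> 3 * d * (2 * d - 1)"
    using assms by linarith
  then have "d * (d + 1/2)\<^sup>2 \<le> d * (3 * d * (2 * d - 1))"
    using assms by (intro mult_left_mono) auto
  also have "\<dots> = 2 * (d - 1/2) * (3 * d\<^sup>2)"
    by (simp add: power2_eq_square algebra_simps)
  finally show ?thesis .
qed

lemma Vor_0_subset_cball:
  fixes \<xi> :: "(real^'n) set"
  assumes "l > 0" and hit: "\<And>z. z \<in> I_set \<Longrightarrow> \<xi> \<inter> cube_K l z \<noteq> {}"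
  shows "Vor 0 \<xi> \<subseteq> cball 0 (3 * l * CARD('n)\<^sup>2)"
proof
  fix y assume y: "y \<in> Vor 0 \<xi>"
  define d where "d = real CARD('n)"
  have "d \<ge> 1" unfolding d_def by simp
  obtain x where x: "x \<in> \<xi>" "x \<in> cube_K l (sign_corner y)"
    using hit[OF sign_corner_in_I_set] by blast
  have "2 * (l * (d - 1/2)) * norm y \<le> 2 * inner y x"
    using inner_ge_on_cube_K_sign_corner[OF x(2)] assms(1) by (simp add: d_def)
  also have "\<dots> \<le> (norm x)\<^sup>2"
    using Vor_0_inner_le[OF y x(1)] .
  also have "\<dots> \<le> d * (l * d + l / 2)\<^sup>2"
    using cube_K_norm_le[OF x(2), of "int CARD('n)"] abs_sign_corner[of y] assms(1)
    by (simp add: d_def)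
  also have "\<dots> = l\<^sup>2 * (d * (d + 1/2)\<^sup>2)"
    by (simp add: power2_eq_square algebra_simps)
  also have "\<dots> \<le> l\<^sup>2 * (2 * (d - 1/2) * (3 * d\<^sup>2))"
    by (intro mult_left_mono cubic_estimate) (auto simp: \<open>d \<ge> 1\<close>)
  also have "\<dots> = 2 * (l * (d - 1/2)) * (3 * l * d\<^sup>2)"
    by (simp add: power2_eq_square algebra_simps)
  finally have "2 * (l * (d - 1/2)) * norm y \<le> 2 * (l * (d - 1/2)) * (3 * l * d\<^sup>2)" .
  moreover have "0 < 2 * (l * (d - 1/2))"
    using assms(1) \<open>d \<ge> 1\<close> by simp
  ultimately have "norm y \<le> 3 * l * d\<^sup>2"
    by (rule mult_left_le_imp_le)
  then show "y \<in> cball 0 (3 * l * CARD('n)\<^sup>2)"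
    by (simp add: d_def)
qed

theorem lemma9p3:
  fixes \<xi> :: "(real^'n) set" and l :: real
  assumes "\<xi> \<in> N_pol" and "0 \<in> \<xi>" and "l > 0"
    and "\<And>z. z \<in> I_set \<Longrightarrow> \<xi> \<inter> cube_K l z \<noteq> {}"
  shows "fund_region 0 \<xi> \<subseteq> cball 0 (6 * l * real CARD('n) ^ 2)"
  using fund_region_subset_cball[OF Vor_0_subset_cball[OF assms(3,4)]] by (simp add: ac_simps)

end
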